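(* Let $G_1$ be the graph constructed as follows: take a star with centre $c$ and leaves $v_1,v_2,v_3,v_4$, and for each $i\in\{1,2,3,4\}$ take a copy $S_i$ of $S$ in which the vertex $a$ is identified with $c$ and the vertex $b$ is identified with $v_i$ (so the edge $ab$ of $S_i$ is the edge $cv_i$), the copies $S_1,\dots,S_4$ being otherwise vertex-disjoint. Then for every subgraph $H$ of $G_1$ with maximum degree $\Delta(H)\le 3$, the graph $G_1-E(H)$ is not $3$-choosable.
   Context: $J_3$ is the graph with vertex set $\{a,b,c,d,e,f,g,h,i,j,k\}$ and edges $ab$; $ac,ad,ae,af,ag$; $bc,bd,be,bf,bg$; $cd,de,ef,fg$; $ha,hd,he$; $ia,ie,if$; $jb,jd,je$; $kb,ke,kf$. $S$ is the graph obtained from nine pairwise vertex-disjoint copies of $J_3$ by identifying all copies of $a$ into a single vertex $a$ and all copies of $b$ into a single vertex $b$, all other vertices staying distinct. A graph is $3$-choosable if for every assignment of a list of $3$ colours to each vertex there is a proper colouring choosing each vertex's colour from its list. (The resulting graph $G_1$ is planar.) *)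

theory Defs
  imports Main
begin

definition choosable :: "nat \<Rightarrow> 'v set \<Rightarrow> 'v set set \<Rightarrow> bool" where
  "choosable k V E \<longleftrightarrow>
     (\<forall>L :: 'v \<Rightarrow> nat set. (\<forall>v\<in>V. finite (L v) \<and> card (L v) = k) \<longrightarrow>
        (\<exists>col. (\<forall>v\<in>V. col v \<in> L v) \<and> (\<forall>u v. {u, v} \<in> E \<and> u \<noteq> v \<longrightarrow> col u \<noteq> col v)))"

definition is_subgraph :: "'v set \<Rightarrow> 'v set set \<Rightarrow> 'v set \<Rightarrow> 'v set set \<Rightarrow> bool" where
  "is_subgraph VH EH V E \<longleftrightarrow> VH \<subseteq> V \<and> EH \<subseteq> E \<and> (\<forall>e\<in>EH. e \<subseteq> VH)"

definition degree :: "'v set set \<Rightarrow> 'v \<Rightarrow> nat" where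
  "degree E v = card {e\<in>E. v \<in> e}"

definition max_degree_le :: "'v set \<Rightarrow> 'v set set \<Rightarrow> nat \<Rightarrow> bool" where
  "max_degree_le V E d \<longleftrightarrow> (\<forall>v\<in>V. degree E v \<le> d)"

datatype jv = A | B | C | D | E | F | G | H | I | J | K

definition J3_edges :: "(jv \<times> jv) list" where
  "J3_edges =
    [(A,B),
     (A,C),(A,D),(A,E),(A,F),(A,G),
     (B,C),(B,D),(B,E),(B,F),(B,G),
     (C,D),(D,E),(E,F),(F,G),
     (H,A),(H,D),(H,E),
     (I,A),(I,E),(I,F),
     (J,B),(J,D),(J,E),
     (K,B),(K,E),(K,F)]"

text \<open>Vertices: the centre c, leaves v_i (i < 4), and for each i < 4 and each
  copy j < 9 of J_3 inside S_i, the non-a, non-b vertices of that copy.\<close>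

datatype gv = Cen | Leaf nat | Inner nat nat jv

fun emb :: "nat \<Rightarrow> nat \<Rightarrow> jv \<Rightarrow> gv" where
  "emb i j A = Cen"
| "emb i j B = Leaf i"
| "emb i j x = Inner i j x"

definition G1_V :: "gv set" where
  "G1_V = {Cen} \<union> {Leaf i | i. i < 4} \<union> {Inner i j x | i j x. i < 4 \<and> j < 9 \<and> x \<notin> {A, B}}"

definition G1_E :: "gv set set" where
  "G1_E = {{Cen, Leaf i} | i. i < 4}
        \<union> {{emb i j x, emb i j y} | i j x y. i < 4 \<and> j < 9 \<and> (x, y) \<in> set J3_edges}"

end

theory Submission
  imports Defs "HOL-Library.Disjoint_Sets"
begin

text \<open>Removing the edges of a subgraph of maximum degree 3 leaves the centre untouched in one of
  the four branches, and leaves the leaf of that branch untouched in at least 6 of its 9 copies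
  of \<open>J\<^sub>3\<close>. Give \<open>c\<close> and \<open>v\<^sub>i\<close> the list \<open>{1,2,3}\<close> and assign to each of the 6 ordered pairs
  \<open>(p,q)\<close> of distinct colours its own untouched copy, with lists that force \<open>c,d,g\<close> to colour 4 once
  \<open>a,b\<close> get \<open>p,q\<close>. If the path \<open>cdefg\<close> survives, \<open>e,f\<close> are forced to 4 as well; otherwise
  \<open>e,f\<close> get 5 and 6, and each of \<open>h,i,j,k\<close> needs one of its two edges into \<open>{d,e,f}\<close> removed,
  which pushes the degree of \<open>d\<close>, \<open>e\<close> or \<open>f\<close> in the removed subgraph to 4.\<close>

lemma degree_le_if_max_degree_le:
  assumes "max_degree_le V Es d" and "\<forall>e\<in>Es. e \<subseteq> V"
  shows "degree Es v \<le> d"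
proof (cases "v \<in> V")
  case True
  then show ?thesis using assms(1) by (simp add: max_degree_le_def)
next
  case False
  then have "{e\<in>Es. v \<in> e} = {}" using assms(2) by blast
  then show ?thesis unfolding degree_def by (metis card.empty zero_le)
qed

lemma card_neighbours_le_degree:
  assumes "finite Es" and "(\<lambda>y. {x, y}) ` N \<subseteq> Es" and "x \<notin> N"
  shows "card N \<le> degree Es x"
proof -
  have "inj_on (\<lambda>y. {x, y}) N" using assms(3) by (auto simp: inj_on_def doubleton_eq_iff)
  then have "card N = card ((\<lambda>y. {x, y}) ` N)" by (simp add: card_image)
  also have "\<dots> \<le> card {e\<in>Es. x \<in> e}" using assms(1,2) by (intro card_mono) auto
  finally show ?thesis by (simp add: degree_def)
qed

lemma degree_vimage_image_le:
  assumes "inj f" and "finite Es"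
  shows "degree ((`) f -` Es) x \<le> degree Es (f x)"
  unfolding degree_def
  by (rule card_inj_on_le[where f = "(`) f"]) (use assms in \<open>auto simp: inj_on_def inj_image_eq_iff\<close>)

definition joins :: "'v set set \<Rightarrow> 'v \<Rightarrow> 'v set \<Rightarrow> bool" where
  "joins Es v S \<longleftrightarrow> (\<exists>e\<in>Es. v \<in> e \<and> e \<inter> S \<noteq> {})"

lemma card_joined_classes_le_degree:
  assumes "finite Es" and "\<forall>e\<in>Es. card e = 2"
    and "disjoint_family_on S Is" and "\<forall>i\<in>Is. h \<notin> S i"
    and "\<forall>i\<in>Is. joins Es h (S i)"
  shows "card Is \<le> degree Es h"
proof -
  obtain g where g: "\<forall>i\<in>Is. g i \<in> Es \<and> h \<in> g i \<and> g i \<inter> S i \<noteq> {}"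
    using bchoice[OF assms(5)[unfolded joins_def Bex_def]] by blast
  have "inj_on g Is"
  proof (rule inj_onI)
    fix i i' assume ii': "i \<in> Is" "i' \<in> Is" "g i = g i'"
    obtain s where s: "s \<in> g i" "s \<in> S i" using g ii'(1) by blast
    obtain s' where s': "s' \<in> g i" "s' \<in> S i'" using g ii'(2,3) by force
    have "card (g i) = 2" using g ii'(1) assms(2) by blast
    then obtain u v where "g i = {u, v}" by (meson card_2_iff)
    moreover have "h \<in> g i" using g ii'(1) by blast
    moreover have "s \<noteq> h" "s' \<noteq> h" using ii' s(2) s'(2) assms(4) by auto
    ultimately have "s = s'" using s(1) s'(1) by auto
    then show "i = i'" using s(2) s'(2) ii'(1,2) assms(3) by (auto simp: disjoint_family_on_def)
  qed
  then have "card Is \<le> card {e\<in>Es. h \<in> e}"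
    by (rule card_inj_on_le) (use g assms(1) in auto)
  then show ?thesis by (simp add: degree_def)
qed

lemma finite_G1_E: "finite G1_E"
proof -
  have "G1_E \<subseteq> (\<lambda>i. {Cen, Leaf i}) ` {..<4} \<union>
     (\<lambda>(i, j, x, y). {emb i j x, emb i j y}) ` ({..<4} \<times> {..<9} \<times> set J3_edges)"
    unfolding G1_E_def by (auto intro: rev_image_eqI)
  then show ?thesis by (rule finite_subset) auto
qed

lemma card_G1_E: "e \<in> G1_E \<Longrightarrow> card e = 2"
  by (auto simp: G1_E_def J3_edges_def)

lemma G1_subgraph_edges:
  assumes "is_subgraph VH EH G1_V G1_E"
  shows "finite EH" and "\<forall>e\<in>EH. card e = 2" and "\<forall>e\<in>EH. e \<subseteq> VH"
  using assms finite_G1_E card_G1_E by (auto simp: is_subgraph_def intro: finite_subset)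

lemma G1_subgraph_degree_le:
  assumes "is_subgraph VH EH G1_V G1_E" and "max_degree_le VH EH d"
  shows "degree EH v \<le> d"
  using degree_le_if_max_degree_le[OF assms(2) G1_subgraph_edges(3)[OF assms(1)]] .

lemma inj_emb: "inj (emb i j)"
proof (rule injI)
  show "x = y" if "emb i j x = emb i j y" for x y
    using that by (cases x; cases y) simp_all
qed

definition copy_vertices :: "nat \<Rightarrow> nat \<Rightarrow> gv set" where
  "copy_vertices i j = range (Inner i j)"

definition branch_vertices :: "nat \<Rightarrow> gv set" where
  "branch_vertices i = insert (Leaf i) (\<Union>j. copy_vertices i j)"

lemma emb_mem_copy: "emb i j x \<in> {Cen, Leaf i} \<union> copy_vertices i j"
  by (cases x) (auto simp: copy_vertices_def)

lemma exists_unjoined_branch: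
  assumes "is_subgraph VH EH G1_V G1_E" and "max_degree_le VH EH 3"
  obtains i where "i < 4" and "\<not> joins EH Cen (branch_vertices i)"
proof -
  define T where "T = {i. i < (4::nat) \<and> joins EH Cen (branch_vertices i)}"
  have "disjoint_family_on branch_vertices T"
    by (auto simp: disjoint_family_on_def branch_vertices_def copy_vertices_def)
  moreover have "\<forall>i\<in>T. Cen \<notin> branch_vertices i"
    by (auto simp: branch_vertices_def copy_vertices_def)
  ultimately have "card T \<le> degree EH Cen"
    using G1_subgraph_edges[OF assms(1)] by (intro card_joined_classes_le_degree) (auto simp: T_def)
  also have "\<dots> \<le> 3" using G1_subgraph_degree_le[OF assms] .
  finally have "\<not> {..<4} \<subseteq> T"
    using card_mono[of T "{..<4::nat}"] by (auto simp: T_def)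
  then show ?thesis using that by (auto simp: T_def)
qed

lemma card_unjoined_copies:
  assumes "is_subgraph VH EH G1_V G1_E" and "max_degree_le VH EH 3"
  shows "6 \<le> card {j. j < 9 \<and> \<not> joins EH (Leaf i) (copy_vertices i j)}"
proof -
  define T where "T = {j. j < (9::nat) \<and> joins EH (Leaf i) (copy_vertices i j)}"
  have "disjoint_family_on (copy_vertices i) T" and "\<forall>j\<in>T. Leaf i \<notin> copy_vertices i j"
    by (auto simp: disjoint_family_on_def copy_vertices_def)
  then have "card T \<le> degree EH (Leaf i)"
    using G1_subgraph_edges[OF assms(1)] by (intro card_joined_classes_le_degree) (auto simp: T_def)
  also have "\<dots> \<le> 3" using G1_subgraph_degree_le[OF assms] .
  moreover have "{j. j < 9 \<and> \<not> joins EH (Leaf i) (copy_vertices i j)} = {..<9} - T"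
    by (auto simp: T_def)
  moreover have "card ({..<9} - T) = 9 - card T"
    by (subst card_Diff_subset) (auto simp: T_def)
  ultimately show ?thesis by simp
qed

definition colour_pairs :: "(nat \<times> nat) set" where
  "colour_pairs = {(p, q). p \<in> {1, 2, 3} \<and> q \<in> {1, 2, 3} \<and> p \<noteq> q}"

lemma colour_pairs_eq: "colour_pairs = {(1, 2), (1, 3), (2, 1), (2, 3), (3, 1), (3, 2)}"
  by (auto simp: colour_pairs_def)

lemma exists_reserved_copies:
  assumes "is_subgraph VH EH G1_V G1_E" and "max_degree_le VH EH 3"
  obtains f where "inj_on f colour_pairs"
    and "\<forall>pq\<in>colour_pairs. f pq < 9 \<and> \<not> joins EH (Leaf i) (copy_vertices i (f pq))"
proof -
  have "card colour_pairs \<le> card {j. j < 9 \<and> \<not> joins EH (Leaf i) (copy_vertices i j)}"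
    using card_unjoined_copies[OF assms, of i] by (simp add: colour_pairs_eq)
  then show ?thesis
    using that card_le_inj[of colour_pairs "{j. j < 9 \<and> \<not> joins EH (Leaf i) (copy_vertices i j)}"]
    by (auto simp: colour_pairs_eq)
qed

text \<open>The entries at \<open>a, b\<close> are never used: in \<open>G\<^sub>1\<close> these are
  \<open>c, v\<^sub>i\<close>, whose lists are fixed to \<open>{1,2,3}\<close>.\<close>

definition gadget_lists :: "bool \<Rightarrow> nat \<Rightarrow> nat \<Rightarrow> jv \<Rightarrow> nat set" where
  "gadget_lists kept p q x = (case x of
     A \<Rightarrow> {1, 2, 3} | B \<Rightarrow> {1, 2, 3}
   | C \<Rightarrow> {p, q, 4} | D \<Rightarrow> {p, q, 4} | G \<Rightarrow> {p, q, 4}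
   | E \<Rightarrow> (if kept then {p, q, 4} else {p, q, 5})
   | F \<Rightarrow> (if kept then {p, q, 4} else {p, q, 6})
   | H \<Rightarrow> {p, 4, 5} | I \<Rightarrow> {p, 5, 6} | J \<Rightarrow> {q, 4, 5} | K \<Rightarrow> {q, 5, 6})"

lemma card_gadget_lists:
  "(p, q) \<in> colour_pairs \<Longrightarrow> finite (gadget_lists kept p q x) \<and> card (gadget_lists kept p q x) = 3"
  by (cases x) (auto simp: gadget_lists_def colour_pairs_def)

definition path_kept :: "jv set set \<Rightarrow> bool" where
  "path_kept R \<longleftrightarrow> \<not> {{C, D}, {D, E}, {E, F}, {F, G}} \<subseteq> R"

lemma J3_removed_path_overloads:
  fixes R :: "jv set set"
  assumes fin: "finite R" and deg: "\<forall>x. degree R x \<le> 3"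
    and path: "{{C, D}, {D, E}, {E, F}, {F, G}} \<subseteq> R"
    and "{H, D} \<in> R \<or> {H, E} \<in> R" and "{I, E} \<in> R \<or> {I, F} \<in> R"
    and "{J, D} \<in> R \<or> {J, E} \<in> R" and "{K, E} \<in> R \<or> {K, F} \<in> R"
  shows False
proof -
  have crowded: "\<not> (\<lambda>y. {x, y}) ` N \<subseteq> R" if "x \<notin> N" and "card N = 4" for x N
  proof
    assume "(\<lambda>y. {x, y}) ` N \<subseteq> R"
    then have "card N \<le> degree R x" using card_neighbours_le_degree[OF fin _ that(1)] by blast
    then show False using spec[OF deg, of x] that(2) by linarith
  qed
  have "\<not> ({D, H} \<in> R \<and> {D, J} \<in> R)"
    using crowded[of D "{C, E, H, J}"] path by (simp add: insert_commute)
  moreover have "\<not> ({F, I} \<in> R \<and> {F, K} \<in> R)"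
    using crowded[of F "{E, G, I, K}"] path by (simp add: insert_commute)
  moreover have E: "\<not> ({E, y} \<in> R \<and> {E, y'} \<in> R)"
    if "y \<in> {H, I, J, K}" and "y' \<in> {H, I, J, K}" and "y \<noteq> y'" for y y'
    using crowded[of E "{D, F, y, y'}"] path that by (auto simp: insert_commute)
  ultimately show False
    using assms(4-7) E[of H I] E[of H J] E[of H K] E[of I J] E[of I K] E[of J K]
    by (auto simp: insert_commute)
qed

lemma J3_not_gadget_list_colourable:
  fixes R :: "jv set set" and col :: "jv \<Rightarrow> nat"
  assumes "finite R" and "\<forall>x. degree R x \<le> 3"
    and avoid: "\<forall>e\<in>R. A \<notin> e \<and> B \<notin> e"
    and lists: "\<forall>x. x \<notin> {A, B} \<longrightarrow> col x \<in> gadget_lists (path_kept R) (col A) (col B) x"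
    and proper: "\<forall>(x, y)\<in>set J3_edges. {x, y} \<notin> R \<longrightarrow> col x \<noteq> col y"
  shows False
proof -
  have ne: "col x \<noteq> col y" if "(x, y) \<in> set J3_edges" and "{x, y} \<notin> R" for x y
    using proper that by blast
  have ne_AB: "col x \<noteq> col y" if "(x, y) \<in> set J3_edges" and "x \<in> {A, B} \<or> y \<in> {A, B}" for x y
    using ne[OF that(1)] avoid that(2) by blast
  have "col C = 4" "col D = 4" "col G = 4"
    using lists ne_AB[of A C] ne_AB[of B C] ne_AB[of A D] ne_AB[of B D] ne_AB[of A G] ne_AB[of B G]
    by (auto simp: gadget_lists_def J3_edges_def)
  show False
  proof (cases "path_kept R")
    case True
    then have "col E = 4" "col F = 4"
      using lists ne_AB[of A E] ne_AB[of B E] ne_AB[of A F] ne_AB[of B F]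
      by (auto simp: gadget_lists_def J3_edges_def)
    then show False
      using True \<open>col C = 4\<close> \<open>col D = 4\<close> \<open>col G = 4\<close> ne[of C D] ne[of D E] ne[of E F] ne[of F G]
      by (auto simp: path_kept_def J3_edges_def)
  next
    case False
    have "col E = 5" "col F = 6"
      using False lists ne_AB[of A E] ne_AB[of B E] ne_AB[of A F] ne_AB[of B F]
      by (auto simp: gadget_lists_def J3_edges_def)
    moreover have "col H \<in> {col A, 4, 5}" "col I \<in> {col A, 5, 6}"
      "col J \<in> {col B, 4, 5}" "col K \<in> {col B, 5, 6}"
      using lists by (auto simp: gadget_lists_def)
    ultimately have "{H, D} \<in> R \<or> {H, E} \<in> R" "{I, E} \<in> R \<or> {I, F} \<in> R"
      "{J, D} \<in> R \<or> {J, E} \<in> R" "{K, E} \<in> R \<or> {K, F} \<in> R"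
      using \<open>col D = 4\<close> ne_AB[of H A] ne[of H D] ne[of H E] ne_AB[of I A] ne[of I E] ne[of I F]
        ne_AB[of J B] ne[of J D] ne[of J E] ne_AB[of K B] ne[of K E] ne[of K F]
      by (auto simp: J3_edges_def)
    then show False
      using False J3_removed_path_overloads[OF assms(1,2)] unfolding path_kept_def by blast
  qed
qed

definition copy_removed :: "gv set set \<Rightarrow> nat \<Rightarrow> nat \<Rightarrow> jv set set" where
  "copy_removed EH i j = (`) (emb i j) -` EH"

lemma copy_removed_avoids_ends:
  assumes "is_subgraph VH EH G1_V G1_E"
    and "\<not> joins EH Cen (branch_vertices i)" and "\<not> joins EH (Leaf i) (copy_vertices i j)"
    and "e \<in> copy_removed EH i j"
  shows "A \<notin> e" and "B \<notin> e"
proof -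
  define X where "X = emb i j ` e"
  have X: "X \<in> EH" using assms(4) by (simp add: X_def copy_removed_def)
  have branch: "Cen \<in> X \<Longrightarrow> X \<inter> branch_vertices i = {}"
    and copy: "Leaf i \<in> X \<Longrightarrow> X \<inter> copy_vertices i j = {}"
    using assms(2,3) X by (auto simp: joins_def)
  have not_singleton: "\<not> X \<subseteq> {v}" for v
  proof
    assume "X \<subseteq> {v}"
    then have "card X \<le> card {v}" by (intro card_mono) simp_all
    then show False using G1_subgraph_edges(2)[OF assms(1)] X by simp
  qed
  have X_sub: "X \<subseteq> {Cen, Leaf i} \<union> copy_vertices i j"
    unfolding X_def using emb_mem_copy by blast
  have Leaf_branch: "Leaf i \<in> branch_vertices i"
    and copy_branch: "copy_vertices i j \<subseteq> branch_vertices i"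
    by (auto simp: branch_vertices_def)
  show "A \<notin> e"
  proof
    assume "A \<in> e"
    then have "Cen \<in> X" unfolding X_def by (metis emb.simps(1) imageI)
    then have "X \<subseteq> {Cen}" using branch X_sub Leaf_branch copy_branch by blast
    then show False using not_singleton by blast
  qed
  show "B \<notin> e"
  proof
    assume "B \<in> e"
    then have "Leaf i \<in> X" unfolding X_def by (metis emb.simps(2) imageI)
    then have "X \<subseteq> {Leaf i}" using branch copy X_sub Leaf_branch by blast
    then show False using not_singleton by blast
  qed
qed

lemma G1_copy_not_gadget_list_colourable:
  assumes sub: "is_subgraph VH EH G1_V G1_E" and "max_degree_le VH EH 3"
    and "i < 4" and "j < 9"
    and branch: "\<not> joins EH Cen (branch_vertices i)"
    and copy: "\<not> joins EH (Leaf i) (copy_vertices i j)"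
    and proper: "\<forall>u v. {u, v} \<in> G1_E - EH \<and> u \<noteq> v \<longrightarrow> col u \<noteq> col v"
    and lists: "\<forall>x. x \<notin> {A, B} \<longrightarrow>
      col (Inner i j x) \<in> gadget_lists (path_kept (copy_removed EH i j)) (col Cen) (col (Leaf i)) x"
  shows False
proof (rule J3_not_gadget_list_colourable[where R = "copy_removed EH i j" and col = "col \<circ> emb i j"])
  note EH = G1_subgraph_edges[OF sub]
  show "finite (copy_removed EH i j)"
    unfolding copy_removed_def using EH(1) inj_emb by (intro finite_vimageI) (auto simp: inj_on_image)
  show "\<forall>x. degree (copy_removed EH i j) x \<le> 3"
    using degree_vimage_image_le[OF inj_emb EH(1)] G1_subgraph_degree_le[OF assms(1,2)]
    unfolding copy_removed_def by (meson order_trans)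
  show "\<forall>e\<in>copy_removed EH i j. A \<notin> e \<and> B \<notin> e"
    using copy_removed_avoids_ends[OF sub branch copy] by blast
  have "emb i j x = Inner i j x" if "x \<notin> {A, B}" for x
    using that by (cases x) auto
  then show "\<forall>x. x \<notin> {A, B} \<longrightarrow> (col \<circ> emb i j) x
      \<in> gadget_lists (path_kept (copy_removed EH i j)) ((col \<circ> emb i j) A) ((col \<circ> emb i j) B) x"
    using lists by simp
  have "(col \<circ> emb i j) x \<noteq> (col \<circ> emb i j) y"
    if xy: "(x, y) \<in> set J3_edges" and "{x, y} \<notin> copy_removed EH i j" for x y
  proof -
    have "{emb i j x, emb i j y} \<notin> EH" using that(2) by (simp add: copy_removed_def)
    moreover have "{emb i j x, emb i j y} \<in> G1_E"
      unfolding G1_E_def using xy \<open>i < 4\<close> \<open>j < 9\<close> by blast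
    moreover have "emb i j x \<noteq> emb i j y"
      using xy inj_emb[of i j] by (auto simp: J3_edges_def inj_eq)
    ultimately show ?thesis using proper by auto
  qed
  then show "\<forall>(x, y)\<in>set J3_edges. {x, y} \<notin> copy_removed EH i j
      \<longrightarrow> (col \<circ> emb i j) x \<noteq> (col \<circ> emb i j) y"
    by blast
qed

text \<open>Lists on \<open>G\<^sub>1\<close>: branch \<open>i\<close> reserves the copy \<open>f (p, q)\<close> for the colours \<open>p, q\<close> of \<open>c, v\<^sub>i\<close>.\<close>

definition G1_lists :: "gv set set \<Rightarrow> nat \<Rightarrow> (nat \<times> nat \<Rightarrow> nat) \<Rightarrow> gv \<Rightarrow> nat set" where
  "G1_lists EH i f v = (case v of
     Inner i' j x \<Rightarrow>
       if i' = i \<and> j \<in> f ` colour_pairs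
       then (case inv_into colour_pairs f j of
               (p, q) \<Rightarrow> gadget_lists (path_kept (copy_removed EH i j)) p q x)
       else {1, 2, 3}
   | _ \<Rightarrow> {1, 2, 3})"

lemma card_G1_lists: "finite (G1_lists EH i f v) \<and> card (G1_lists EH i f v) = 3"
proof (cases v)
  case (Inner i' j x)
  show ?thesis
  proof (cases "i' = i \<and> j \<in> f ` colour_pairs")
    case True
    then have "inv_into colour_pairs f j \<in> colour_pairs" by (auto intro: inv_into_into)
    then show ?thesis using True card_gadget_lists by (auto simp: G1_lists_def Inner split: prod.split)
  qed (auto simp: G1_lists_def Inner)
qed (simp_all add: G1_lists_def)

lemma G1_lists_reserved_copy:
  assumes "inj_on f colour_pairs" and "(p, q) \<in> colour_pairs"
  shows "G1_lists EH i f (Inner i (f (p, q)) x)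
    = gadget_lists (path_kept (copy_removed EH i (f (p, q)))) p q x"
  using assms by (simp add: G1_lists_def inv_into_f_f)

lemma G1_not_list_colourable:
  assumes "is_subgraph VH EH G1_V G1_E" and "max_degree_le VH EH 3"
    and i: "i < 4" and branch: "\<not> joins EH Cen (branch_vertices i)"
    and inj: "inj_on f colour_pairs"
    and reserved: "\<forall>pq\<in>colour_pairs. f pq < 9 \<and> \<not> joins EH (Leaf i) (copy_vertices i (f pq))"
    and col: "\<forall>v\<in>G1_V. col v \<in> G1_lists EH i f v"
    and proper: "\<forall>u v. {u, v} \<in> G1_E - EH \<and> u \<noteq> v \<longrightarrow> col u \<noteq> col v"
  shows False
proof -
  have "Cen \<in> G1_V" "Leaf i \<in> G1_V" using i by (auto simp: G1_V_def)
  then have "col Cen \<in> {1, 2, 3}" "col (Leaf i) \<in> {1, 2, 3}"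
    using col unfolding G1_lists_def by force+
  moreover have "{Cen, Leaf i} \<in> G1_E - EH"
    using i branch by (auto simp: G1_E_def branch_vertices_def joins_def)
  then have "col Cen \<noteq> col (Leaf i)" using proper by blast
  ultimately have pair: "(col Cen, col (Leaf i)) \<in> colour_pairs" by (simp add: colour_pairs_def)
  define j where "j = f (col Cen, col (Leaf i))"
  have j: "j < 9" "\<not> joins EH (Leaf i) (copy_vertices i j)"
    using reserved pair unfolding j_def by blast+
  show False
  proof (rule G1_copy_not_gadget_list_colourable[OF assms(1,2) i j(1) branch j(2) proper], intro allI impI)
    fix x :: jv assume "x \<notin> {A, B}"
    then have "Inner i j x \<in> G1_V" using i j(1) by (auto simp: G1_V_def)
    then show "col (Inner i j x) \<in> gadget_lists (path_kept (copy_removed EH i j)) (col Cen) (col (Leaf i)) x"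
      using bspec[OF col] G1_lists_reserved_copy[OF inj pair] unfolding j_def by metis
  qed
qed

theorem theorem5:
  fixes VH :: "gv set" and EH :: "gv set set"
  assumes "is_subgraph VH EH G1_V G1_E"
    and "max_degree_le VH EH 3"
  shows "\<not> choosable 3 G1_V (G1_E - EH)"
proof
  assume choosable: "choosable 3 G1_V (G1_E - EH)"
  obtain i where i: "i < 4" and branch: "\<not> joins EH Cen (branch_vertices i)"
    using exists_unjoined_branch[OF assms] .
  obtain f where inj: "inj_on f colour_pairs"
    and reserved: "\<forall>pq\<in>colour_pairs. f pq < 9 \<and> \<not> joins EH (Leaf i) (copy_vertices i (f pq))"
    using exists_reserved_copies[OF assms] .
  have "\<forall>v\<in>G1_V. finite (G1_lists EH i f v) \<and> card (G1_lists EH i f v) = 3"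
    using card_G1_lists by blast
  then obtain col where col: "\<forall>v\<in>G1_V. col v \<in> G1_lists EH i f v"
    and proper: "\<forall>u v. {u, v} \<in> G1_E - EH \<and> u \<noteq> v \<longrightarrow> col u \<noteq> col v"
    using choosable unfolding choosable_def by blast
  show False by (rule G1_not_list_colourable[OF assms i branch inj reserved col proper])
qed

end
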